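(* Let $(\mathcal{Y},T,\nu)$ be as in the context. Suppose that $R:\mathcal{U}\to\mathcal{U}$ is a Borel self-map of a complete metric space $\mathcal{U}$. Suppose that $f:\mathcal{U}\times\mathcal{Y}\to\mathbb{R}$ is a Borel function for which there exists $f^*\in L^1(\nu)$ with $\sup_{u\in\mathcal{U}}|f(u,y)|\le f^*(y)$ for each $y\in\mathcal{Y}$. Then for any $\lambda\in\mathcal{J}(R:\nu)$ with disintegration $\lambda=\int\lambda_y\otimes\delta_y\,d\nu(y)$, for $\nu$-almost every $y\in\mathcal{Y}$, \[ \lim_{n\to\infty}\frac1n\int f_n(u,y)\,d\lambda_y(u)=\int f\,d\lambda, \] where $f_n(u,y)=\sum_{k=0}^{n-1}f(R^ku,T^ky)$.
   Context: $\mathcal{Y}$ is a complete separable metric space with its Borel $\sigma$-algebra, $T:\mathcal{Y}\to\mathcal{Y}$ is Borel measurable, and $\nu$ is a $T$-invariant ergodic Borel probability measure. $\mathcal{J}(R:\nu)$ denotes the set of Borel probability measures on $\mathcal{U}\times\mathcal{Y}$ that are invariant under $R\times T$ and have $\mathcal{Y}$-marginal $\nu$. The disintegration $\lambda=\int\lambda_y\otimes\delta_y\,d\nu(y)$ means $y\mapsto\lambda_y$ is a Borel map into probability measures on $\mathcal{U}$ with $\int g\,d\lambda=\int\int g(u,y)\,d\lambda_y(u)\,d\nu(y)$ for bounded Borel $g$. *)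

theory Defs
  imports "HOL-Probability.Probability"
begin

definition invariant_ergodic :: "('y::topological_space \<Rightarrow> 'y) \<Rightarrow> 'y measure \<Rightarrow> bool" where
  "invariant_ergodic T \<nu> \<longleftrightarrow>
     prob_space \<nu> \<and> sets \<nu> = sets borel \<and> T \<in> borel_measurable borel \<and>
     distr \<nu> \<nu> T = \<nu> \<and>
     (\<forall>A \<in> sets \<nu>. T -` A = A \<longrightarrow> measure \<nu> A = 0 \<or> measure \<nu> A = 1)"

definition joinings :: "('u::topological_space \<Rightarrow> 'u) \<Rightarrow> ('y::topological_space \<Rightarrow> 'y) \<Rightarrow> 'y measure
    \<Rightarrow> ('u \<times> 'y) measure set" where
  "joinings R T \<nu> = {lam. prob_space lam \<and> sets lam = sets borel \<and>
      distr lam lam (\<lambda>(u, y). (R u, T y)) = lam \<and> distr lam borel snd = \<nu>}"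

definition disintegration :: "('y::topological_space \<Rightarrow> 'u::topological_space measure) \<Rightarrow> 'y measure
    \<Rightarrow> ('u \<times> 'y) measure \<Rightarrow> bool" where
  "disintegration K \<nu> Lam \<longleftrightarrow>
     K \<in> measurable borel (prob_algebra borel) \<and>
     (\<forall>g \<in> borel_measurable borel. (\<exists>B::real. \<forall>x. \<bar>g x\<bar> \<le> B) \<longrightarrow>
        (\<integral>x. g x \<partial>Lam) = (\<integral>y. (\<integral>u. g (u, y) \<partial>K y) \<partial>\<nu>))"

end

theory Submission
  imports Defs
begin

text \<open>Birkhoff's theorem for the joining \<open>(Lam, R \<times> T)\<close> makes the averages of \<open>f\<close> converge
  \<open>Lam\<close>-a.e. to an invariant limit \<open>g\<close> with the same integral, bounded by \<open>\<integral> fstar d\<nu>\<close>, the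
  limit of the averages of \<open>fstar\<close> along the ergodic base. Integrating a bounded invariant
  function over the fibres \<open>K y\<close> gives a \<open>T\<close>-invariant function of \<open>y\<close>: by the disintegration its
  correlation with its own shift equals its second moment. Ergodicity of \<open>\<nu>\<close> makes it constant,
  equal to \<open>\<integral> f dLam\<close>. As \<open>Lam\<close>-null sets are \<open>K y\<close>-null for \<open>\<nu>\<close>-a.e. \<open>y\<close>, dominated
  convergence on each fibre, with the bound \<open>(1/n) \<Sum>\<^sub>k<n fstar (T\<^sup>k y)\<close>, gives the theorem.\<close>

section \<open>Borel sets of products and measurable kernels\<close>

lemma open_prod_eq_Union_basis:
  fixes Op :: "('a::topological_space \<times> 'b::topological_space) set"
  assumes "open Op" and B: "topological_basis B"
  shows "Op = (\<Union>W\<in>B. \<Union>{V. open V \<and> V \<times> W \<subseteq> Op} \<times> W)"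
proof
  show "Op \<subseteq> (\<Union>W\<in>B. \<Union>{V. open V \<and> V \<times> W \<subseteq> Op} \<times> W)"
  proof
    fix z assume z: "z \<in> Op"
    obtain u y where zz: "z = (u, y)" by (cases z)
    from open_prod_elim[OF \<open>open Op\<close> z] obtain A C
      where AC: "open A" "open C" "z \<in> A \<times> C" "A \<times> C \<subseteq> Op"
      by blast
    then obtain W where W: "W \<in> B" "y \<in> W" "W \<subseteq> C"
      using topological_basisE[OF B, of C y] zz by auto
    then have "A \<times> W \<subseteq> Op" using AC by auto
    then show "z \<in> (\<Union>W\<in>B. \<Union>{V. open V \<and> V \<times> W \<subseteq> Op} \<times> W)"
      using AC W zz by blast
  qed
qed auto

lemma sets_borel_prod_second_countable:
  "sets (borel :: ('a::topological_space \<times> 'b::second_countable_topology) measure)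
   = sets (borel \<Otimes>\<^sub>M borel)"
proof (rule antisym)
  have "fst \<in> borel_measurable (borel :: ('a \<times> 'b) measure)"
    and "snd \<in> borel_measurable (borel :: ('a \<times> 'b) measure)"
    by (intro borel_measurable_continuous_onI continuous_intros)+
  then have "id \<in> measurable (borel :: ('a \<times> 'b) measure) (borel \<Otimes>\<^sub>M borel)"
    by (simp add: measurable_pair_iff)
  from measurable_sets[OF this]
  show "sets (borel \<Otimes>\<^sub>M borel) \<subseteq> sets (borel :: ('a \<times> 'b) measure)"
    by auto
next
  obtain B :: "'b set set" where B: "countable B" "topological_basis B"
    using ex_countable_basis by blast
  have "id \<in> measurable (borel \<Otimes>\<^sub>M borel) (borel :: ('a \<times> 'b) measure)"
  proof (rule borel_measurableI)
    fix Op :: "('a \<times> 'b) set" assume "open Op"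
    have "\<Union>{V. open V \<and> V \<times> W \<subseteq> Op} \<times> W \<in> sets (borel \<Otimes>\<^sub>M borel)" if "W \<in> B" for W
      using B(2) that by (intro pair_measureI borel_open open_Union) (auto simp: topological_basis_open)
    then have "(\<Union>W\<in>B. \<Union>{V. open V \<and> V \<times> W \<subseteq> Op} \<times> W) \<in> sets (borel \<Otimes>\<^sub>M borel)"
      by (intro sets.countable_UN'[OF B(1)]) auto
    then show "id -` Op \<inter> space (borel \<Otimes>\<^sub>M borel) \<in> sets (borel \<Otimes>\<^sub>M borel)"
      using open_prod_eq_Union_basis[OF \<open>open Op\<close> B(2)] by (simp add: space_pair_measure)
  qed
  from measurable_sets[OF this]
  show "sets (borel :: ('a \<times> 'b) measure) \<subseteq> sets (borel \<Otimes>\<^sub>M borel)"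
    by (auto simp: space_pair_measure)
qed

lemma integral_measurable_subprob_algebra2:
  fixes f :: "_ \<Rightarrow> _ \<Rightarrow> real"
  assumes f[measurable]: "(\<lambda>(x, y). f x y) \<in> borel_measurable (M \<Otimes>\<^sub>M N)"
    and L[measurable]: "L \<in> measurable M (subprob_algebra N)"
  shows "(\<lambda>x. integral\<^sup>L (L x) (f x)) \<in> borel_measurable M"
proof -
  note integral_measurable_subprob_algebra[measurable] measurable_distr2[measurable]
  have "(\<lambda>x. integral\<^sup>L (distr (L x) (M \<Otimes>\<^sub>M N) (\<lambda>y. (x, y))) (\<lambda>(x, y). f x y)) \<in> borel_measurable M"
    by measurable
  then show ?thesis
    by (rule measurable_cong[THEN iffD1, rotated]) (simp add: integral_distr)
qed

section \<open>Birkhoff's ergodic theorem\<close>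

locale mpt = prob_space M for M :: "'a measure" +
  fixes T :: "'a \<Rightarrow> 'a"
  assumes T_measurable[measurable]: "T \<in> measurable M M"
    and T_preserves: "distr M M T = M"
begin

lemma funpow_T_measurable[measurable]: "(T ^^ n) \<in> measurable M M"
  by (induction n) (auto intro: measurable_comp[OF _ T_measurable])

lemma distr_funpow_T: "distr M M (T ^^ n) = M"
proof (induction n)
  case (Suc n)
  have "distr M M (T ^^ Suc n) = distr (distr M M (T ^^ n)) M T"
    by (simp add: distr_distr)
  also have "\<dots> = M" using Suc T_preserves by simp
  finally show ?case .
qed (simp add: id_def)

lemma AE_funpow_T:
  assumes "AE x in M. P x" shows "AE x in M. P ((T ^^ n) x)"
proof (rule AE_distrD[OF funpow_T_measurable])
  show "AE x in distr M M (T ^^ n). P x" by (subst distr_funpow_T) (rule assms)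
qed

lemma AE_T:
  assumes "AE x in M. P x" shows "AE x in M. P (T x)"
  using AE_funpow_T[OF assms, of 1] by simp

lemma AE_invariant_funpow_T:
  assumes "AE x in M. g (T x) = g x" shows "AE x in M. \<forall>k. g ((T ^^ k) x) = g x"
proof -
  have "AE x in M. \<forall>k. g (T ((T ^^ k) x)) = g ((T ^^ k) x)"
    unfolding AE_all_countable using AE_funpow_T[OF assms] by blast
  then show ?thesis
  proof eventually_elim
    case (elim x)
    show ?case
    proof
      show "g ((T ^^ k) x) = g x" for k
        by (induction k) (use elim in auto)
    qed
  qed
qed

lemma integrable_comp_funpow_T:
  fixes h :: "'a \<Rightarrow> real"
  assumes "integrable M h" shows "integrable M (\<lambda>x. h ((T ^^ n) x))"
proof -
  have [measurable]: "h \<in> borel_measurable M" using assms by auto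
  have "integrable (distr M M (T ^^ n)) h" using assms distr_funpow_T by simp
  then show ?thesis by (subst (asm) integrable_distr_eq) auto
qed

lemma integral_comp_funpow_T:
  fixes h :: "'a \<Rightarrow> real"
  assumes [measurable]: "h \<in> borel_measurable M"
  shows "(\<integral>x. h ((T ^^ n) x) \<partial>M) = integral\<^sup>L M h"
proof -
  have "(\<integral>x. h ((T ^^ n) x) \<partial>M) = integral\<^sup>L (distr M M (T ^^ n)) h"
    by (subst integral_distr) auto
  then show ?thesis using distr_funpow_T by simp
qed

lemma integral_comp_T:
  fixes h :: "'a \<Rightarrow> real"
  assumes "h \<in> borel_measurable M"
  shows "(\<integral>x. h (T x) \<partial>M) = integral\<^sup>L M h"
  using integral_comp_funpow_T[OF assms, of 1] by simp

definition birkhoff_sum :: "('a \<Rightarrow> real) \<Rightarrow> nat \<Rightarrow> 'a \<Rightarrow> real" where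
  "birkhoff_sum h n x = (\<Sum>k<n. h ((T ^^ k) x))"

lemma birkhoff_sum_0[simp]: "birkhoff_sum h 0 x = 0"
  by (simp add: birkhoff_sum_def)

lemma birkhoff_sum_Suc: "birkhoff_sum h (Suc n) x = h x + birkhoff_sum h n (T x)"
  unfolding birkhoff_sum_def by (subst sum.lessThan_Suc_shift) (simp add: funpow_swap1)

lemma birkhoff_sum_diff: "birkhoff_sum (\<lambda>x. g x - h x) n x = birkhoff_sum g n x - birkhoff_sum h n x"
  unfolding birkhoff_sum_def by (simp add: sum_subtractf)

lemma birkhoff_sum_uminus: "birkhoff_sum (\<lambda>x. - g x) n x = - birkhoff_sum g n x"
  unfolding birkhoff_sum_def by (simp add: sum_negf)

lemma birkhoff_sum_const: "birkhoff_sum (\<lambda>_. c) n x = real n * c"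
  by (simp add: birkhoff_sum_def)

lemma birkhoff_sum_measurable[measurable]:
  assumes [measurable]: "h \<in> borel_measurable M" shows "birkhoff_sum h n \<in> borel_measurable M"
  unfolding birkhoff_sum_def[abs_def] by measurable

lemma abs_birkhoff_sum_le: "\<bar>birkhoff_sum h n x\<bar> \<le> birkhoff_sum (\<lambda>x. \<bar>h x\<bar>) n x"
  unfolding birkhoff_sum_def by (rule sum_abs)

lemma integrable_birkhoff_sum:
  "integrable M h \<Longrightarrow> integrable M (birkhoff_sum h n)"
  unfolding birkhoff_sum_def[abs_def] by (auto intro!: integrable_sum integrable_comp_funpow_T)

definition birkhoff_max :: "('a \<Rightarrow> real) \<Rightarrow> nat \<Rightarrow> 'a \<Rightarrow> real" where
  "birkhoff_max h N x = Max ((\<lambda>n. birkhoff_sum h n x) ` {..N})"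

lemma birkhoff_sum_le_max: "n \<le> N \<Longrightarrow> birkhoff_sum h n x \<le> birkhoff_max h N x"
  unfolding birkhoff_max_def by (intro Max_ge) auto

lemma birkhoff_max_nonneg: "0 \<le> birkhoff_max h N x"
  using birkhoff_sum_le_max[of 0 N h x] by simp

lemma birkhoff_max_le_iff: "birkhoff_max h N x \<le> c \<longleftrightarrow> (\<forall>n\<le>N. birkhoff_sum h n x \<le> c)"
  by (auto simp: birkhoff_max_def Max_le_iff)

lemma birkhoff_max_le_step: "birkhoff_max h N x \<le> max 0 (h x + birkhoff_max h N (T x))"
  unfolding birkhoff_max_le_iff
proof safe
  fix n assume "n \<le> N"
  then show "birkhoff_sum h n x \<le> max 0 (h x + birkhoff_max h N (T x))"
  proof (cases n)
    case (Suc m)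
    then have "birkhoff_sum h m (T x) \<le> birkhoff_max h N (T x)"
      using \<open>n \<le> N\<close> by (intro birkhoff_sum_le_max) auto
    then show ?thesis using Suc by (simp add: birkhoff_sum_Suc)
  qed simp
qed

lemma birkhoff_max_measurable[measurable]:
  "h \<in> borel_measurable M \<Longrightarrow> birkhoff_max h N \<in> borel_measurable M"
  unfolding birkhoff_max_def by (intro borel_measurable_Max) auto

lemma integrable_birkhoff_max:
  assumes "integrable M h" shows "integrable M (birkhoff_max h N)"
proof (rule Bochner_Integration.integrable_bound)
  show "integrable M (birkhoff_sum (\<lambda>x. \<bar>h x\<bar>) N)"
    using assms by (intro integrable_birkhoff_sum) auto
  have "birkhoff_max h N x \<le> birkhoff_sum (\<lambda>x. \<bar>h x\<bar>) N x" for x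
    unfolding birkhoff_max_le_iff birkhoff_sum_def
    by (auto intro: order_trans[OF sum_mono sum_mono2])
  then show "AE x in M. norm (birkhoff_max h N x) \<le> norm (birkhoff_sum (\<lambda>x. \<bar>h x\<bar>) N x)"
    using birkhoff_max_nonneg by (intro AE_I2) (simp add: birkhoff_sum_def sum_nonneg)
qed (use assms in auto)

text \<open>Garsia's proof: on the set where the running maximum is positive it satisfies
  \<open>birkhoff_max h N \<le> h + birkhoff_max h N \<circ> T\<close>, and \<open>T\<close> preserves its integral.\<close>

lemma integral_birkhoff_max_pos_nonneg:
  fixes h :: "'a \<Rightarrow> real"
  assumes h: "integrable M h"
  shows "0 \<le> (\<integral>x. h x * indicator {y \<in> space M. 0 < birkhoff_max h N y} x \<partial>M)"
proof -
  have [measurable]: "h \<in> borel_measurable M" using h by auto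
  note max_int = integrable_birkhoff_max[OF h, of N]
  have "0 = (\<integral>x. birkhoff_max h N x \<partial>M) - (\<integral>x. birkhoff_max h N (T x) \<partial>M)"
    by (simp add: integral_comp_T)
  also have "\<dots> = (\<integral>x. birkhoff_max h N x - birkhoff_max h N (T x) \<partial>M)"
    using max_int integrable_comp_funpow_T[OF max_int, of 1] by simp
  also have "\<dots> \<le> (\<integral>x. h x * indicator {y \<in> space M. 0 < birkhoff_max h N y} x \<partial>M)"
  proof (rule integral_mono)
    show "integrable M (\<lambda>x. birkhoff_max h N x - birkhoff_max h N (T x))"
      using max_int integrable_comp_funpow_T[OF max_int, of 1] by simp
    show "integrable M (\<lambda>x. h x * indicator {y \<in> space M. 0 < birkhoff_max h N y} x)"
      by (intro integrable_real_mult_indicator h) measurable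
    show "birkhoff_max h N x - birkhoff_max h N (T x)
        \<le> h x * indicator {y \<in> space M. 0 < birkhoff_max h N y} x" if "x \<in> space M" for x
      using birkhoff_max_le_step[of h N x] birkhoff_max_nonneg[of h N x]
        birkhoff_max_nonneg[of h N "T x"] that
      by (cases "0 < birkhoff_max h N x") (auto simp: indicator_def max_def split: if_splits)
  qed
  finally show ?thesis .
qed

lemma maximal_ergodic_inequality:
  fixes h :: "'a \<Rightarrow> real"
  assumes h: "integrable M h"
  shows "0 \<le> (\<integral>x. h x * indicator {x \<in> space M. \<exists>n. 0 < birkhoff_sum h n x} x \<partial>M)"
proof (rule LIMSEQ_le_const)
  have lim: "(\<lambda>N. h x * indicator {y \<in> space M. 0 < birkhoff_max h N y} x) \<longlonglongrightarrow>
      h x * indicator {x \<in> space M. \<exists>n. 0 < birkhoff_sum h n x} x" for x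
  proof (cases "\<exists>n. 0 < birkhoff_sum h n x")
    case True
    then obtain n where "0 < birkhoff_sum h n x" by blast
    then have "\<forall>N\<ge>n. 0 < birkhoff_max h N x"
      using birkhoff_sum_le_max[of n _ h x] by fastforce
    then show ?thesis
      using True by (intro tendsto_eventually) (auto simp: eventually_sequentially indicator_def)
  next
    case False
    then have "\<not> 0 < birkhoff_max h N x" for N
      by (auto simp: not_less birkhoff_max_le_iff)
    then show ?thesis using False by (simp add: indicator_def)
  qed
  show "(\<lambda>N. \<integral>x. h x * indicator {y \<in> space M. 0 < birkhoff_max h N y} x \<partial>M) \<longlonglongrightarrow>
      (\<integral>x. h x * indicator {x \<in> space M. \<exists>n. 0 < birkhoff_sum h n x} x \<partial>M)"
  proof (rule integral_dominated_convergence[where w="\<lambda>x. \<bar>h x\<bar>"])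
    show "AE x in M. (\<lambda>N. h x * indicator {y \<in> space M. 0 < birkhoff_max h N y} x) \<longlonglongrightarrow>
        h x * indicator {x \<in> space M. \<exists>n. 0 < birkhoff_sum h n x} x"
      using lim by simp
  qed (use h in \<open>auto simp: indicator_def\<close>)
qed (use integral_birkhoff_max_pos_nonneg[OF h] in auto)

lemma integral_nonneg_if_AE_birkhoff_sum_pos:
  fixes h :: "'a \<Rightarrow> real"
  assumes h: "integrable M h" and pos: "AE x in M. \<exists>n. 0 < birkhoff_sum h n x"
  shows "0 \<le> integral\<^sup>L M h"
proof -
  have [measurable]: "h \<in> borel_measurable M" using h by auto
  have "(\<integral>x. h x * indicator {x \<in> space M. \<exists>n. 0 < birkhoff_sum h n x} x \<partial>M) = integral\<^sup>L M h"
    using pos by (intro integral_cong_AE) (auto simp: indicator_def)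
  then show ?thesis using maximal_ergodic_inequality[OF h] by simp
qed

lemma funpow_T_in_invariant_iff:
  assumes "x \<in> space M" "\<And>x. x \<in> space M \<Longrightarrow> T x \<in> A \<longleftrightarrow> x \<in> A"
  shows "(T ^^ k) x \<in> A \<longleftrightarrow> x \<in> A"
proof (induction k)
  case (Suc k)
  have "(T ^^ k) x \<in> space M" using assms(1) measurable_space[OF funpow_T_measurable] by blast
  then show ?case using assms(2)[of "(T ^^ k) x"] Suc by simp
qed simp

lemma integral_invariant_set_nonneg:
  fixes h :: "'a \<Rightarrow> real"
  assumes h: "integrable M h" and A[measurable]: "A \<in> sets M"
    and inv: "\<And>x. x \<in> space M \<Longrightarrow> T x \<in> A \<longleftrightarrow> x \<in> A"
    and pos: "\<And>x. x \<in> A \<Longrightarrow> \<exists>n. 0 < birkhoff_sum h n x"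
  shows "0 \<le> (\<integral>x. h x * indicator A x \<partial>M)"
proof -
  have [measurable]: "h \<in> borel_measurable M" using h by auto
  define g where "g x = h x * indicator A x" for x
  have "birkhoff_sum g n x = indicator A x * birkhoff_sum h n x" if "x \<in> space M" for n x
    unfolding birkhoff_sum_def g_def using funpow_T_in_invariant_iff[OF that inv]
    by (auto simp: indicator_def sum_distrib_left)
  then have "(\<integral>x. g x * indicator {x \<in> space M. \<exists>n. 0 < birkhoff_sum g n x} x \<partial>M) = (\<integral>x. g x \<partial>M)"
    using pos by (intro Bochner_Integration.integral_cong) (auto simp: indicator_def g_def)
  moreover have "integrable M g" unfolding g_def by (intro integrable_real_mult_indicator h A)
  ultimately have "0 \<le> (\<integral>x. g x \<partial>M)"
    using maximal_ergodic_inequality[of g] by simp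
  then show ?thesis by (simp add: g_def)
qed

end

lemma Limsup_average_le:
  fixes s :: "nat \<Rightarrow> real"
  assumes "\<And>n. s n - real n * b \<le> C"
  shows "Limsup sequentially (\<lambda>n. ereal (s n / real n)) \<le> ereal b"
proof (rule ereal_le_epsilon2)
  fix e :: real assume e: "0 < e"
  obtain N :: nat where N: "max C 0 / e < N" using reals_Archimedean2 by blast
  have "ereal (s n / real n) \<le> ereal b + ereal e" if n: "Suc N \<le> n" for n
  proof -
    have "max C 0 < real N * e" using N e by (simp add: pos_divide_less_eq)
    also have "\<dots> \<le> real n * e" using n e by (intro mult_right_mono) auto
    finally have "s n \<le> real n * (b + e)" using assms[of n] by (simp add: algebra_simps)
    then show ?thesis using n by (simp add: divide_le_eq mult.commute)
  qed
  then show "Limsup sequentially (\<lambda>n. ereal (s n / real n)) \<le> ereal b + ereal e"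
    by (intro Limsup_bounded) (auto simp: eventually_sequentially)
qed

lemma Liminf_average_ge:
  fixes s :: "nat \<Rightarrow> real"
  assumes "\<And>n. real n * a - s n \<le> C"
  shows "ereal a \<le> Liminf sequentially (\<lambda>n. ereal (s n / real n))"
proof -
  have "Limsup sequentially (\<lambda>n. ereal ((- s n) / real n)) \<le> ereal (- a)"
    using assms by (intro Limsup_average_le[where C=C]) (simp add: algebra_simps)
  moreover have "Limsup sequentially (\<lambda>n. ereal ((- s n) / real n))
      = - Liminf sequentially (\<lambda>n. ereal (s n / real n))"
    by (simp add: ereal_Limsup_uminus[symmetric] o_def)
  ultimately show ?thesis
    by (simp add: ereal_uminus_le_reorder)
qed

lemma convergent_average_if_bounded_deviations:
  fixes s :: "nat \<Rightarrow> real"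
  assumes above: "\<exists>b C. \<forall>n. s n - real n * b \<le> C"
    and below: "\<exists>a C. \<forall>n. real n * a - s n \<le> C"
    and gap: "\<And>a b. a \<in> \<rat> \<Longrightarrow> b \<in> \<rat> \<Longrightarrow> a < b \<Longrightarrow>
      (\<exists>C. \<forall>n. s n - real n * b \<le> C) \<or> (\<exists>C. \<forall>n. real n * a - s n \<le> C)"
  shows "convergent (\<lambda>n. s n / real n)"
proof -
  define X where "X = (\<lambda>n. ereal (s n / real n))"
  obtain b where b: "Limsup sequentially X \<le> ereal b"
    using above Limsup_average_le unfolding X_def by blast
  obtain a where a: "ereal a \<le> Liminf sequentially X"
    using below Liminf_average_ge unfolding X_def by blast
  have le: "Liminf sequentially X \<le> Limsup sequentially X"
    by (rule Liminf_le_Limsup) simp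
  obtain l u where l: "Liminf sequentially X = ereal l" and u: "Limsup sequentially X = ereal u"
    using a b le by (cases "Liminf sequentially X"; cases "Limsup sequentially X") auto
  have "l = u"
  proof (rule ccontr)
    assume "l \<noteq> u"
    with le l u have "l < u" by simp
    then obtain a' b' where ab': "a' \<in> \<rat>" "b' \<in> \<rat>" "l < a'" "a' < b'" "b' < u"
      by (metis Rats_dense_in_real)
    from gap[OF ab'(1,2,4)] show False
    proof
      assume "\<exists>C. \<forall>n. s n - real n * b' \<le> C"
      then have "Limsup sequentially X \<le> ereal b'" unfolding X_def using Limsup_average_le by blast
      with u ab' show False by simp
    next
      assume "\<exists>C. \<forall>n. real n * a' - s n \<le> C"
      then have "ereal a' \<le> Liminf sequentially X" unfolding X_def using Liminf_average_ge by blast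
      with l ab' show False by simp
    qed
  qed
  then have "(X \<longlongrightarrow> ereal u) sequentially"
    using l u by (subst tendsto_iff_Liminf_eq_Limsup) auto
  then show ?thesis unfolding X_def convergent_def by auto
qed

lemma average_eventually_gt:
  fixes s :: "nat \<Rightarrow> real"
  assumes "(\<lambda>n. s n / real n) \<longlonglongrightarrow> l" "0 < e"
  shows "\<exists>n. real n * (l - e) < s n"
proof -
  obtain N where N: "\<And>n. N \<le> n \<Longrightarrow> dist (s n / real n) l < e"
    using tendstoD[OF assms] unfolding eventually_sequentially by blast
  have "l - e < s (Suc N) / real (Suc N)" using N[of "Suc N"] by (auto simp: dist_real_def)
  then have "real (Suc N) * (l - e) < s (Suc N)"
    by (simp add: pos_less_divide_eq mult.commute del: of_nat_Suc)
  then show ?thesis by blast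
qed

context mpt
begin

text \<open>The bound ranges over \<open>nat\<close> so that the predicate is measurable.\<close>

definition birkhoff_unbounded :: "('a \<Rightarrow> real) \<Rightarrow> 'a \<Rightarrow> bool" where
  "birkhoff_unbounded g x \<longleftrightarrow> (\<forall>C::nat. \<exists>n. real C < birkhoff_sum g n x)"

lemma birkhoff_unbounded_measurable[measurable]:
  assumes [measurable]: "g \<in> borel_measurable M"
  shows "Measurable.pred M (birkhoff_unbounded g)"
  unfolding birkhoff_unbounded_def[abs_def] by measurable

lemma birkhoff_unbounded_T_iff: "birkhoff_unbounded g (T x) \<longleftrightarrow> birkhoff_unbounded g x"
proof
  assume u: "birkhoff_unbounded g (T x)"
  show "birkhoff_unbounded g x" unfolding birkhoff_unbounded_def
  proof
    fix C :: nat
    obtain C' :: nat where C': "real C - g x \<le> real C'" using real_arch_simple by blast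
    from u obtain n where "real C' < birkhoff_sum g n (T x)" unfolding birkhoff_unbounded_def by blast
    then have "real C < birkhoff_sum g (Suc n) x" using C' by (simp add: birkhoff_sum_Suc)
    then show "\<exists>n. real C < birkhoff_sum g n x" by blast
  qed
next
  assume u: "birkhoff_unbounded g x"
  show "birkhoff_unbounded g (T x)" unfolding birkhoff_unbounded_def
  proof
    fix C :: nat
    obtain C' :: nat where C': "real C + \<bar>g x\<bar> \<le> real C'" using real_arch_simple by blast
    from u obtain n where n: "real C' < birkhoff_sum g n x" unfolding birkhoff_unbounded_def by blast
    with C' obtain m where m: "n = Suc m" by (cases n) auto
    have "real C < birkhoff_sum g m (T x)" using n C' m by (simp add: birkhoff_sum_Suc)
    then show "\<exists>n. real C < birkhoff_sum g n (T x)" by blast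
  qed
qed

lemma birkhoff_sum_bounded_if_not_unbounded:
  "\<not> birkhoff_unbounded g x \<Longrightarrow> \<exists>C. \<forall>n. birkhoff_sum g n x \<le> C"
  unfolding birkhoff_unbounded_def by (auto simp: not_less)

lemma integral_unbounded_invariant_set_nonneg:
  fixes g :: "'a \<Rightarrow> real"
  assumes "integrable M g" and "A \<in> sets M"
    and "\<And>x. x \<in> space M \<Longrightarrow> T x \<in> A \<longleftrightarrow> x \<in> A"
    and "\<And>x. x \<in> A \<Longrightarrow> birkhoff_unbounded g x"
  shows "0 \<le> (\<integral>x. g x * indicator A x \<partial>M)"
  using assms by (intro integral_invariant_set_nonneg) (auto simp: birkhoff_unbounded_def, metis of_nat_0)

lemma measure_birkhoff_unbounded_shift_le:
  fixes g :: "'a \<Rightarrow> real"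
  assumes g: "integrable M g"
  shows "c * measure M {x \<in> space M. birkhoff_unbounded (\<lambda>x. g x - c) x} \<le> (\<integral>x. \<bar>g x\<bar> \<partial>M)"
    (is "c * measure M ?A \<le> _")
proof -
  have [measurable]: "g \<in> borel_measurable M" using g by auto
  have A[measurable]: "?A \<in> sets M" by measurable
  have "0 \<le> (\<integral>x. (g x - c) * indicator ?A x \<partial>M)"
    using g measurable_space[OF T_measurable]
    by (intro integral_unbounded_invariant_set_nonneg) (auto simp: birkhoff_unbounded_T_iff)
  also have "\<dots> = (\<integral>x. g x * indicator ?A x - c * indicator ?A x \<partial>M)"
    by (simp add: left_diff_distrib)
  also have "\<dots> = (\<integral>x. g x * indicator ?A x \<partial>M) - c * measure M ?A"
    using g by (subst Bochner_Integration.integral_diff)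
      (auto intro!: integrable_real_mult_indicator integrable_real_indicator simp: emeasure_eq_measure)
  finally have "c * measure M ?A \<le> (\<integral>x. g x * indicator ?A x \<partial>M)"
    by simp
  also have "\<dots> \<le> (\<integral>x. \<bar>g x\<bar> \<partial>M)"
    using g by (intro integral_mono integrable_real_mult_indicator) (auto simp: indicator_def)
  finally show ?thesis .
qed

lemma AE_birkhoff_sum_drift_bounded:
  fixes g :: "'a \<Rightarrow> real"
  assumes g: "integrable M g"
  shows "AE x in M. \<exists>b C. \<forall>n. birkhoff_sum g n x - real n * b \<le> C"
proof -
  have [measurable]: "g \<in> borel_measurable M" using g by auto
  define A where "A m = {x \<in> space M. birkhoff_unbounded (\<lambda>x. g x - real m) x}" for m :: nat
  have A[measurable]: "A m \<in> sets M" for m unfolding A_def by measurable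
  define B where "B = (\<Inter>m. A m)"
  have B[measurable]: "B \<in> sets M" unfolding B_def by measurable
  have "measure M B = 0"
  proof (rule ccontr)
    assume "measure M B \<noteq> 0"
    then have pos: "0 < measure M B" using measure_nonneg[of M B] by linarith
    obtain m :: nat where "(\<integral>x. \<bar>g x\<bar> \<partial>M) / measure M B < real m"
      using reals_Archimedean2 by blast
    then have "(\<integral>x. \<bar>g x\<bar> \<partial>M) < real m * measure M B"
      using pos by (simp add: pos_divide_less_eq)
    also have "\<dots> \<le> real m * measure M (A m)"
      using A by (intro mult_left_mono finite_measure_mono) (auto simp: B_def)
    finally show False
      using measure_birkhoff_unbounded_shift_le[OF g, of "real m"] by (simp add: A_def)
  qed
  then have "AE x in M. x \<notin> B"
    using B by (intro AE_not_in) (simp add: emeasure_eq_measure null_setsI)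
  with AE_space show ?thesis
  proof eventually_elim
    case (elim x)
    then obtain m :: nat where "\<not> birkhoff_unbounded (\<lambda>x. g x - real m) x"
      by (auto simp: B_def A_def)
    then obtain C where "\<forall>n. birkhoff_sum g n x - real n * real m \<le> C"
      by (auto dest!: birkhoff_sum_bounded_if_not_unbounded simp: birkhoff_sum_diff birkhoff_sum_const)
    then show ?case by blast
  qed
qed

lemma AE_birkhoff_sum_excursion:
  fixes f :: "'a \<Rightarrow> real"
  assumes f: "integrable M f" and "a < b"
  shows "AE x in M. (\<exists>C. \<forall>n. birkhoff_sum f n x - real n * b \<le> C)
    \<or> (\<exists>C. \<forall>n. real n * a - birkhoff_sum f n x \<le> C)"
proof -
  have [measurable]: "f \<in> borel_measurable M" using f by auto
  define A where "A = {x \<in> space M. birkhoff_unbounded (\<lambda>x. f x - b) x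
    \<and> birkhoff_unbounded (\<lambda>x. a - f x) x}"
  have A[measurable]: "A \<in> sets M" unfolding A_def by measurable
  have A_inv: "T x \<in> A \<longleftrightarrow> x \<in> A" if "x \<in> space M" for x
    using that measurable_space[OF T_measurable that] by (auto simp: A_def birkhoff_unbounded_T_iff)
  have "0 \<le> (\<integral>x. (f x - b) * indicator A x \<partial>M) + (\<integral>x. (a - f x) * indicator A x \<partial>M)"
    using f A_inv by (intro add_nonneg_nonneg integral_unbounded_invariant_set_nonneg)
      (auto simp: A_def)
  also have "\<dots> = (\<integral>x. (f x - b) * indicator A x + (a - f x) * indicator A x \<partial>M)"
    using f by (intro Bochner_Integration.integral_add[symmetric] integrable_real_mult_indicator) auto
  also have "\<dots> = (\<integral>x. (a - b) * indicator A x \<partial>M)"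
    by (intro Bochner_Integration.integral_cong) (auto simp: algebra_simps)
  also have "\<dots> = (a - b) * measure M A" using A by simp
  finally have "measure M A = 0"
    using \<open>a < b\<close> measure_nonneg[of M A] by (simp add: zero_le_mult_iff)
  then have "AE x in M. x \<notin> A"
    using A by (intro AE_not_in) (simp add: emeasure_eq_measure null_setsI)
  with AE_space show ?thesis
  proof eventually_elim
    case (elim x)
    then consider "\<not> birkhoff_unbounded (\<lambda>x. f x - b) x" | "\<not> birkhoff_unbounded (\<lambda>x. a - f x) x"
      by (auto simp: A_def)
    then show ?case
    proof cases
      case 1
      then obtain C where "\<forall>n. birkhoff_sum f n x - real n * b \<le> C"
        by (auto dest!: birkhoff_sum_bounded_if_not_unbounded simp: birkhoff_sum_diff birkhoff_sum_const)
      then show ?thesis by blast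
    next
      case 2
      then obtain C where "\<forall>n. real n * a - birkhoff_sum f n x \<le> C"
        by (auto dest!: birkhoff_sum_bounded_if_not_unbounded simp: birkhoff_sum_diff birkhoff_sum_const)
      then show ?thesis by blast
    qed
  qed
qed

theorem AE_birkhoff_average_convergent:
  fixes f :: "'a \<Rightarrow> real"
  assumes f: "integrable M f"
  shows "AE x in M. convergent (\<lambda>n. birkhoff_sum f n x / real n)"
proof -
  have "AE x in M. \<exists>b C. \<forall>n. birkhoff_sum (\<lambda>x. - f x) n x - real n * b \<le> C"
    using f by (intro AE_birkhoff_sum_drift_bounded) auto
  moreover have "AE x in M. \<forall>a\<in>\<rat>. \<forall>b\<in>\<rat>. a < b \<longrightarrow>
      (\<exists>C. \<forall>n. birkhoff_sum f n x - real n * b \<le> C) \<or> (\<exists>C. \<forall>n. real n * a - birkhoff_sum f n x \<le> C)"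
    using AE_birkhoff_sum_excursion[OF f] by (simp add: AE_ball_countable countable_rat)
  ultimately show ?thesis
    using AE_birkhoff_sum_drift_bounded[OF f]
  proof eventually_elim
    case (elim x)
    show ?case
    proof (rule convergent_average_if_bounded_deviations)
      from elim(1) obtain b C where "\<forall>n. - birkhoff_sum f n x - real n * b \<le> C"
        by (auto simp: birkhoff_sum_uminus)
      then have "\<forall>n. real n * (- b) - birkhoff_sum f n x \<le> C"
        by (metis add.commute diff_conv_add_uminus mult_minus_right)
      then show "\<exists>a C. \<forall>n. real n * a - birkhoff_sum f n x \<le> C" by blast
    qed (use elim in auto)
  qed
qed

definition birkhoff_limit :: "('a \<Rightarrow> real) \<Rightarrow> 'a \<Rightarrow> real" where
  "birkhoff_limit f x = lim (\<lambda>n. birkhoff_sum f n x / real n)"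

lemma birkhoff_limit_measurable[measurable]:
  assumes [measurable]: "f \<in> borel_measurable M" shows "birkhoff_limit f \<in> borel_measurable M"
  unfolding birkhoff_limit_def[abs_def] by measurable

lemma AE_birkhoff_average_tendsto:
  assumes "integrable M f"
  shows "AE x in M. (\<lambda>n. birkhoff_sum f n x / real n) \<longlonglongrightarrow> birkhoff_limit f x"
  using AE_birkhoff_average_convergent[OF assms]
  by eventually_elim (simp add: birkhoff_limit_def convergent_LIMSEQ_iff)

lemma AE_birkhoff_limit_T:
  assumes f: "integrable M f" shows "AE x in M. birkhoff_limit f (T x) = birkhoff_limit f x"
  using AE_birkhoff_average_tendsto[OF f] AE_T[OF AE_birkhoff_average_tendsto[OF f]]
proof eventually_elim
  case (elim x)
  have eq: "birkhoff_sum f (Suc n) x / real (Suc n) =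
      f x / real (Suc n) + (real n / real (Suc n)) * (birkhoff_sum f n (T x) / real n)" for n
    by (cases "n = 0") (simp_all add: birkhoff_sum_Suc add_divide_distrib del: of_nat_Suc)
  have "(\<lambda>n. f x / real (Suc n) + (real n / real (Suc n)) * (birkhoff_sum f n (T x) / real n))
      \<longlonglongrightarrow> 0 + 1 * birkhoff_limit f (T x)"
    using LIMSEQ_Suc[OF lim_const_over_n[of "f x"]] LIMSEQ_n_over_Suc_n
    by (intro tendsto_add tendsto_mult elim(2)) simp_all
  then have "(\<lambda>n. birkhoff_sum f (Suc n) x / real (Suc n)) \<longlonglongrightarrow> birkhoff_limit f (T x)"
    unfolding eq by simp
  from LIMSEQ_unique[OF LIMSEQ_Suc[OF elim(1)] this] show ?case by simp
qed

lemma nn_integral_abs_birkhoff_average_le: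
  fixes f :: "'a \<Rightarrow> real"
  assumes f: "integrable M f"
  shows "(\<integral>\<^sup>+x. ennreal \<bar>birkhoff_sum f n x / real n\<bar> \<partial>M) \<le> ennreal (\<integral>x. \<bar>f x\<bar> \<partial>M)"
proof -
  have [measurable]: "f \<in> borel_measurable M" using f by auto
  define w where "w x = birkhoff_sum (\<lambda>x. \<bar>f x\<bar>) n x / real n" for x
  have w: "integrable M w"
    unfolding w_def using f by (intro integrable_divide integrable_birkhoff_sum) auto
  have "(\<integral>\<^sup>+x. ennreal \<bar>birkhoff_sum f n x / real n\<bar> \<partial>M) \<le> (\<integral>\<^sup>+x. ennreal (w x) \<partial>M)"
    unfolding w_def using abs_birkhoff_sum_le
    by (intro nn_integral_mono ennreal_leI) (simp add: abs_div_pos divide_right_mono)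
  also have "\<dots> = ennreal (integral\<^sup>L M w)"
    by (intro nn_integral_eq_integral w AE_I2) (simp add: w_def birkhoff_sum_def sum_nonneg)
  also have "integral\<^sup>L M w = (\<Sum>k<n. (\<integral>x. \<bar>f ((T ^^ k) x)\<bar> \<partial>M)) / real n"
    unfolding w_def birkhoff_sum_def using integrable_comp_funpow_T[OF f]
    by (subst integral_divide_zero, subst Bochner_Integration.integral_sum) (auto intro!: integrable_abs)
  also have "\<dots> = (\<Sum>k<n. (\<integral>x. \<bar>f x\<bar> \<partial>M)) / real n"
    by (subst integral_comp_funpow_T[where h="\<lambda>x. \<bar>f x\<bar>"]) auto
  also have "\<dots> \<le> (\<integral>x. \<bar>f x\<bar> \<partial>M)"
    by (cases "n = 0") auto
  finally show ?thesis by (simp add: ennreal_leI)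
qed

lemma integrable_birkhoff_limit:
  fixes f :: "'a \<Rightarrow> real"
  assumes f: "integrable M f" shows "integrable M (birkhoff_limit f)"
proof -
  have [measurable]: "f \<in> borel_measurable M" using f by auto
  have "(\<integral>\<^sup>+x. ennreal (norm (birkhoff_limit f x)) \<partial>M)
      = (\<integral>\<^sup>+x. liminf (\<lambda>n. ennreal \<bar>birkhoff_sum f n x / real n\<bar>) \<partial>M)"
    using AE_birkhoff_average_tendsto[OF f]
  proof (intro nn_integral_cong_AE, eventually_elim)
    case (elim x)
    then have "(\<lambda>n. ennreal \<bar>birkhoff_sum f n x / real n\<bar>) \<longlonglongrightarrow> ennreal \<bar>birkhoff_limit f x\<bar>"
      by (intro tendsto_ennrealI tendsto_rabs)
    from lim_imp_Liminf[OF _ this] show ?case by simp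
  qed
  also have "\<dots> \<le> liminf (\<lambda>n. \<integral>\<^sup>+x. ennreal \<bar>birkhoff_sum f n x / real n\<bar> \<partial>M)"
    by (intro nn_integral_liminf) measurable
  also have "\<dots> \<le> limsup (\<lambda>n. \<integral>\<^sup>+x. ennreal \<bar>birkhoff_sum f n x / real n\<bar> \<partial>M)"
    by (intro Liminf_le_Limsup) simp
  also have "\<dots> \<le> ennreal (\<integral>x. \<bar>f x\<bar> \<partial>M)"
    using nn_integral_abs_birkhoff_average_le[OF f] by (intro Limsup_bounded always_eventually) auto
  finally show ?thesis by (intro integrableI_bounded) (auto simp: top.not_eq_extremum le_less_trans)
qed

lemma integral_le_if_AE_birkhoff_sum_dominates:
  fixes g h :: "'a \<Rightarrow> real"
  assumes g: "integrable M g" and h: "integrable M h"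
    and h_inv: "AE x in M. \<forall>k. h ((T ^^ k) x) = h x"
    and dom: "AE x in M. \<exists>n. real n * h x < birkhoff_sum g n x"
  shows "integral\<^sup>L M h \<le> integral\<^sup>L M g"
proof -
  have "AE x in M. \<exists>n. 0 < birkhoff_sum (\<lambda>x. g x - h x) n x"
    using h_inv dom
  proof eventually_elim
    case (elim x)
    then have "birkhoff_sum h n x = real n * h x" for n
      by (simp add: birkhoff_sum_def)
    with elim(2) show ?case by (auto simp: birkhoff_sum_diff)
  qed
  then have "0 \<le> (\<integral>x. g x - h x \<partial>M)"
    using g h by (intro integral_nonneg_if_AE_birkhoff_sum_pos) auto
  then show ?thesis using g h by simp
qed

lemma integral_birkhoff_limit_le:
  fixes f :: "'a \<Rightarrow> real"
  assumes f: "integrable M f" shows "integral\<^sup>L M (birkhoff_limit f) \<le> integral\<^sup>L M f"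
proof (rule field_le_epsilon)
  fix e :: real assume "0 < e"
  have "integral\<^sup>L M (birkhoff_limit f) \<le> integral\<^sup>L M (\<lambda>x. f x + e)"
  proof (rule integral_le_if_AE_birkhoff_sum_dominates)
    show "AE x in M. \<exists>n. real n * birkhoff_limit f x < birkhoff_sum (\<lambda>x. f x + e) n x"
      using AE_birkhoff_average_tendsto[OF f]
    proof eventually_elim
      case (elim x)
      from average_eventually_gt[OF elim \<open>0 < e\<close>] obtain n
        where "real n * (birkhoff_limit f x - e) < birkhoff_sum f n x" ..
      moreover have "birkhoff_sum (\<lambda>x. f x + e) n x = birkhoff_sum f n x + real n * e"
        by (simp add: birkhoff_sum_def sum.distrib)
      ultimately show ?case by (intro exI[of _ n]) (simp add: algebra_simps)
    qed
  qed (use f integrable_birkhoff_limit[OF f] AE_invariant_funpow_T[OF AE_birkhoff_limit_T[OF f]] in auto)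
  then show "integral\<^sup>L M (birkhoff_limit f) \<le> integral\<^sup>L M f + e"
    using f by (simp add: prob_space)
qed

lemma integral_le_integral_birkhoff_limit:
  fixes f :: "'a \<Rightarrow> real"
  assumes f: "integrable M f" shows "integral\<^sup>L M f \<le> integral\<^sup>L M (birkhoff_limit f)"
proof (rule field_le_epsilon)
  fix e :: real assume "0 < e"
  have "integral\<^sup>L M (\<lambda>x. - birkhoff_limit f x) \<le> integral\<^sup>L M (\<lambda>x. - f x + e)"
  proof (rule integral_le_if_AE_birkhoff_sum_dominates)
    show "AE x in M. \<exists>n. real n * - birkhoff_limit f x < birkhoff_sum (\<lambda>x. - f x + e) n x"
      using AE_birkhoff_average_tendsto[OF f]
    proof eventually_elim
      case (elim x)
      have "(\<lambda>n. - birkhoff_sum f n x / real n) \<longlonglongrightarrow> - birkhoff_limit f x"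
        using tendsto_minus[OF elim] by simp
      from average_eventually_gt[OF this \<open>0 < e\<close>] obtain n
        where "real n * (- birkhoff_limit f x - e) < - birkhoff_sum f n x" ..
      moreover have "birkhoff_sum (\<lambda>x. - f x + e) n x = - birkhoff_sum f n x + real n * e"
        by (simp add: birkhoff_sum_def sum_subtractf)
      ultimately show ?case by (intro exI[of _ n]) (simp add: algebra_simps)
    qed
  qed (use f integrable_birkhoff_limit[OF f] AE_invariant_funpow_T[OF AE_birkhoff_limit_T[OF f]] in auto)
  then show "integral\<^sup>L M f \<le> integral\<^sup>L M (birkhoff_limit f) + e"
    using f integrable_birkhoff_limit[OF f] by (simp add: prob_space)
qed

theorem integral_birkhoff_limit:
  fixes f :: "'a \<Rightarrow> real"
  assumes "integrable M f" shows "integral\<^sup>L M (birkhoff_limit f) = integral\<^sup>L M f"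
  using integral_birkhoff_limit_le[OF assms] integral_le_integral_birkhoff_limit[OF assms] by simp

end

section \<open>Ergodic systems\<close>

lemma (in prob_space) AE_eq_const_if_AE_le_or_gt:
  fixes g :: "'a \<Rightarrow> real"
  assumes dichotomy: "\<And>q. q \<in> \<rat> \<Longrightarrow> (AE x in M. g x \<le> q) \<or> (AE x in M. q < g x)"
  shows "\<exists>c. AE x in M. g x = c"
proof -
  have AE_iff: "AE x in M. \<forall>q\<in>\<rat>. g x \<le> q \<longleftrightarrow> (AE y in M. g y \<le> q)"
  proof (subst AE_ball_countable[OF countable_rat], intro ballI)
    fix q :: real assume "q \<in> \<rat>"
    from dichotomy[OF this] show "AE x in M. g x \<le> q \<longleftrightarrow> (AE y in M. g y \<le> q)"
    proof
      assume gt: "AE x in M. q < g x"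
      have not_le: "\<not> (AE y in M. g y \<le> q)"
        using gt AE_contr[of "\<lambda>x. g x \<le> q"] by (auto simp: not_le)
      from gt show ?thesis by eventually_elim (simp add: not_le)
    qed (auto elim: eventually_mono)
  qed
  have "\<exists>x. P x" if "AE x in M. P x" for P
  proof (rule ccontr)
    assume "\<nexists>x. P x"
    with that have "AE x in M. False" by simp
    then show False by (simp add: AE_False)
  qed
  from this[OF AE_iff] obtain x0 where x0: "\<forall>q\<in>\<rat>. g x0 \<le> q \<longleftrightarrow> (AE y in M. g y \<le> q)"
    by blast
  from AE_iff have "AE x in M. g x = g x0"
  proof eventually_elim
    case (elim x)
    have same_side: "g x \<le> q \<longleftrightarrow> g x0 \<le> q" if "q \<in> \<rat>" for q
      using elim x0 that by blast
    show ?case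
    proof (rule ccontr)
      assume "g x \<noteq> g x0"
      then have "min (g x) (g x0) < max (g x) (g x0)" by linarith
      then obtain q where "q \<in> \<rat>" "min (g x) (g x0) < q" "q < max (g x) (g x0)"
        using Rats_dense_in_real by blast
      with same_side[of q] show False by (auto simp: min_def max_def split: if_splits)
    qed
  qed
  then show ?thesis by blast
qed

context mpt
begin

text \<open>An almost invariant sublevel set is replaced by the strictly invariant set of points
  whose orbit enters it infinitely often.\<close>

lemma strictly_invariant_sublevel_set:
  fixes g :: "'a \<Rightarrow> real"
  assumes space: "space M = UNIV" and [measurable]: "g \<in> borel_measurable M"
    and inv: "AE x in M. g (T x) = g x"
  obtains A where "A \<in> sets M" "T -` A = A" "AE x in M. x \<in> A \<longleftrightarrow> g x \<le> c"
proof
  define A where "A = {y. \<forall>N::nat. \<exists>n\<ge>N. g ((T ^^ n) y) \<le> c}"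
  have "{y \<in> space M. \<forall>N::nat. \<exists>n\<ge>N. g ((T ^^ n) y) \<le> c} \<in> sets M"
    by measurable
  then show "A \<in> sets M" using space unfolding A_def by simp
  have step: "(T ^^ n) (T y) = (T ^^ Suc n) y" for n y
    by (simp add: funpow_swap1)
  have "T y \<in> A \<longleftrightarrow> y \<in> A" for y
  proof
    assume "T y \<in> A"
    show "y \<in> A" unfolding A_def
    proof (intro CollectI allI)
      fix N :: nat
      from \<open>T y \<in> A\<close> obtain n where "N \<le> n" "g ((T ^^ n) (T y)) \<le> c"
        unfolding A_def by blast
      then show "\<exists>n\<ge>N. g ((T ^^ n) y) \<le> c"
        by (intro exI[of _ "Suc n"]) (simp add: step)
    qed
  next
    assume "y \<in> A"
    show "T y \<in> A" unfolding A_def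
    proof (intro CollectI allI)
      fix N :: nat
      from \<open>y \<in> A\<close> obtain n where "Suc N \<le> n" "g ((T ^^ n) y) \<le> c"
        unfolding A_def by blast
      moreover from this obtain m where "n = Suc m" by (cases n) auto
      ultimately show "\<exists>n\<ge>N. g ((T ^^ n) (T y)) \<le> c"
        by (intro exI[of _ m]) (simp add: step)
    qed
  qed
  then show "T -` A = A" by auto
  show "AE x in M. x \<in> A \<longleftrightarrow> g x \<le> c"
    using AE_invariant_funpow_T[OF inv] by eventually_elim (auto simp: A_def)
qed

theorem ergodic_AE_eq_const:
  fixes g :: "'a \<Rightarrow> real"
  assumes space: "space M = UNIV"
    and ergodic: "\<forall>A\<in>sets M. T -` A = A \<longrightarrow> measure M A = 0 \<or> measure M A = 1"
    and [measurable]: "g \<in> borel_measurable M" and inv: "AE x in M. g (T x) = g x"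
  shows "\<exists>c. AE x in M. g x = c"
proof (rule AE_eq_const_if_AE_le_or_gt)
  fix q :: real
  obtain A where A: "A \<in> sets M" "T -` A = A" and AE_A: "AE x in M. x \<in> A \<longleftrightarrow> g x \<le> q"
    using strictly_invariant_sublevel_set[OF space _ inv] by auto
  from ergodic A consider "measure M A = 0" | "measure M A = 1" by blast
  then show "(AE x in M. g x \<le> q) \<or> (AE x in M. q < g x)"
  proof cases
    case 1
    then have "AE x in M. x \<notin> A"
      using A by (intro AE_not_in) (simp add: emeasure_eq_measure null_setsI)
    with AE_A have "AE x in M. q < g x" by eventually_elim auto
    then show ?thesis ..
  next
    case 2
    then have "AE x in M. x \<in> A" using A by (intro AE_prob_1) auto
    with AE_A have "AE x in M. g x \<le> q" by eventually_elim auto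
    then show ?thesis ..
  qed
qed


theorem ergodic_birkhoff_average_tendsto:
  fixes f :: "'a \<Rightarrow> real"
  assumes space: "space M = UNIV"
    and ergodic: "\<forall>A\<in>sets M. T -` A = A \<longrightarrow> measure M A = 0 \<or> measure M A = 1"
    and f: "integrable M f"
  shows "AE x in M. (\<lambda>n. birkhoff_sum f n x / real n) \<longlonglongrightarrow> integral\<^sup>L M f"
proof -
  have [measurable]: "f \<in> borel_measurable M" using f by auto
  obtain c where c: "AE x in M. birkhoff_limit f x = c"
    using ergodic_AE_eq_const[OF space ergodic _ AE_birkhoff_limit_T[OF f]] by auto
  have "integral\<^sup>L M f = integral\<^sup>L M (birkhoff_limit f)"
    using integral_birkhoff_limit[OF f] by simp
  also have "\<dots> = c"
    using c by (subst integral_cong_AE[where g="\<lambda>_. c"]) (auto simp: prob_space)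
  finally have "integral\<^sup>L M f = c" .
  from AE_birkhoff_average_tendsto[OF f] c show ?thesis
    by eventually_elim (simp add: \<open>integral\<^sup>L M f = c\<close>)
qed

lemma AE_comp_T_eq_if_integral_mult_comp_T_eq:
  fixes \<phi> :: "'a \<Rightarrow> real"
  assumes [measurable]: "\<phi> \<in> borel_measurable M" and bounded: "\<And>x. \<bar>\<phi> x\<bar> \<le> C"
    and eq: "(\<integral>x. \<phi> x * \<phi> (T x) \<partial>M) = (\<integral>x. \<phi> x * \<phi> x \<partial>M)"
  shows "AE x in M. \<phi> (T x) = \<phi> x"
proof -
  have mult_bounded: "\<bar>\<phi> a * \<phi> b\<bar> \<le> C * C" for a b
    unfolding abs_mult using bounded by (intro mult_mono) (auto intro: order_trans[OF abs_ge_zero])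
  have integrable: "integrable M (\<lambda>x. \<phi> (a x) * \<phi> (b x))"
    if [measurable]: "a \<in> measurable M M" "b \<in> measurable M M" for a b
    using mult_bounded by (intro integrable_const_bound[where B="C * C"]) auto
  have square_bounded: "\<bar>(\<phi> (T x) - \<phi> x)\<^sup>2\<bar> \<le> (2 * C)\<^sup>2" for x
  proof -
    have "\<bar>\<phi> (T x) - \<phi> x\<bar> \<le> 2 * C" using bounded[of "T x"] bounded[of x] by linarith
    then have "\<bar>\<phi> (T x) - \<phi> x\<bar>\<^sup>2 \<le> (2 * C)\<^sup>2" by (intro power_mono) auto
    then show ?thesis by simp
  qed
  have "(\<integral>x. (\<phi> (T x) - \<phi> x)\<^sup>2 \<partial>M)
      = (\<integral>x. \<phi> (T x) * \<phi> (T x) - 2 * (\<phi> x * \<phi> (T x)) + \<phi> x * \<phi> x \<partial>M)"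
    by (simp add: power2_eq_square algebra_simps)
  also have "\<dots> = (\<integral>x. \<phi> (T x) * \<phi> (T x) \<partial>M) - 2 * (\<integral>x. \<phi> x * \<phi> (T x) \<partial>M) + (\<integral>x. \<phi> x * \<phi> x \<partial>M)"
    using integrable[of T T] integrable[of "\<lambda>x. x" T] integrable[of "\<lambda>x. x" "\<lambda>x. x"]
    by simp
  also have "\<dots> = 0"
    using eq integral_comp_T[of "\<lambda>x. \<phi> x * \<phi> x"] by simp
  finally have "AE x in M. (\<phi> (T x) - \<phi> x)\<^sup>2 = 0"
    using square_bounded
    by (subst (asm) integral_nonneg_eq_0_iff_AE) (auto intro!: integrable_const_bound[where B="(2 * C)\<^sup>2"])
  then show ?thesis by eventually_elim simp
qed

end

section \<open>Disintegrated joinings over an ergodic base\<close>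

lemma iterate_prod_map:
  fixes R :: "'a \<Rightarrow> 'a" and T :: "'b \<Rightarrow> 'b"
  shows "((\<lambda>(u, y). (R u, T y)) ^^ k) (u, y) = ((R ^^ k) u, (T ^^ k) y)"
  by (induction k) auto

locale ergodic_joining =
  fixes R :: "'u::topological_space \<Rightarrow> 'u" and T :: "'y::second_countable_topology \<Rightarrow> 'y"
    and \<nu> :: "'y measure" and Lam :: "('u \<times> 'y) measure" and K :: "'y \<Rightarrow> 'u measure"
  assumes ergodic: "invariant_ergodic T \<nu>"
    and R_borel[measurable]: "R \<in> borel_measurable borel"
    and joining: "Lam \<in> joinings R T \<nu>"
    and disint: "disintegration K \<nu> Lam"
begin

lemma
  shows prob_space_nu: "prob_space \<nu>"
    and sets_nu[measurable_cong]: "sets \<nu> = sets borel"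
    and T_borel[measurable]: "T \<in> borel_measurable borel"
    and nu_T_invariant: "distr \<nu> \<nu> T = \<nu>"
    and nu_ergodic: "\<forall>A\<in>sets \<nu>. T -` A = A \<longrightarrow> measure \<nu> A = 0 \<or> measure \<nu> A = 1"
  using ergodic unfolding invariant_ergodic_def by auto

lemma
  shows prob_space_Lam: "prob_space Lam"
    and sets_Lam[measurable_cong]: "sets Lam = sets (borel \<Otimes>\<^sub>M borel)"
    and Lam_invariant: "distr Lam Lam (\<lambda>(u, y). (R u, T y)) = Lam"
    and Lam_marginal: "distr Lam borel snd = \<nu>"
  using joining sets_borel_prod_second_countable[where 'a='u and 'b='y]
  unfolding joinings_def by simp_all

lemma space_nu: "space \<nu> = UNIV"
  using sets_eq_imp_space_eq[OF sets_nu] by simp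

sublocale nu: mpt \<nu> T
  by (intro mpt.intro mpt_axioms.intro prob_space_nu nu_T_invariant) measurable

sublocale lam: mpt Lam "\<lambda>(u, y). (R u, T y)"
  by (intro mpt.intro mpt_axioms.intro prob_space_Lam Lam_invariant) measurable

lemma kernel_measurable: "K \<in> measurable borel (prob_algebra borel)"
  using disint unfolding disintegration_def by blast

lemma
  shows prob_space_kernel: "prob_space (K y)"
    and sets_kernel[measurable_cong]: "sets (K y) = sets borel"
  using measurable_space[OF kernel_measurable, of y] by (auto simp: space_prob_algebra)

lemma integral_disintegration:
  fixes g :: "'u \<times> 'y \<Rightarrow> real"
  assumes "g \<in> borel_measurable (borel \<Otimes>\<^sub>M borel)" and "\<And>x. \<bar>g x\<bar> \<le> B"
  shows "(\<integral>x. g x \<partial>Lam) = (\<integral>y. (\<integral>u. g (u, y) \<partial>K y) \<partial>\<nu>)"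
proof -
  have "g \<in> borel_measurable borel"
    using assms(1) by (simp add: measurable_cong_sets[OF sets_borel_prod_second_countable refl])
  then show ?thesis using disint assms(2) unfolding disintegration_def by blast
qed

lemma kernel_integral_measurable[measurable]:
  fixes g :: "'u \<times> 'y \<Rightarrow> real"
  assumes [measurable]: "g \<in> borel_measurable (borel \<Otimes>\<^sub>M borel)"
  shows "(\<lambda>y. \<integral>u. g (u, y) \<partial>K y) \<in> borel_measurable borel"
proof (rule integral_measurable_subprob_algebra2[where f="\<lambda>y u. g (u, y)" and N=borel])
  show "(\<lambda>(y, u). g (u, y)) \<in> borel_measurable (borel \<Otimes>\<^sub>M borel)"
    by measurable
  show "K \<in> borel \<rightarrow>\<^sub>M subprob_algebra borel"
    using measurable_prob_algebraD[OF kernel_measurable] .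
qed

lemma abs_kernel_integral_le:
  fixes g :: "'u \<times> 'y \<Rightarrow> real"
  assumes [measurable]: "g \<in> borel_measurable (borel \<Otimes>\<^sub>M borel)" and "\<And>x. \<bar>g x\<bar> \<le> B"
  shows "\<bar>\<integral>u. g (u, y) \<partial>K y\<bar> \<le> B"
proof -
  interpret prob_space "K y" by (rule prob_space_kernel)
  have "\<bar>\<integral>u. g (u, y) \<partial>K y\<bar> \<le> (\<integral>u. \<bar>g (u, y)\<bar> \<partial>K y)"
    by (rule integral_abs_bound)
  also have "\<dots> \<le> B"
    using assms by (intro integral_le_const integrable_const_bound[where B=B]) auto
  finally show ?thesis .
qed


lemma AE_disintegration:
  assumes "AE x in Lam. P x"
  shows "AE y in \<nu>. AE u in K y. P (u, y)"
proof -
  from assms obtain N where N: "{x \<in> space Lam. \<not> P x} \<subseteq> N" "emeasure Lam N = 0" "N \<in> sets Lam"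
    by (rule AE_E)
  have [measurable]: "N \<in> sets (borel \<Otimes>\<^sub>M borel)" using N(3) sets_Lam by simp
  have space_Lam: "space Lam = UNIV"
    using sets_eq_imp_space_eq[OF sets_Lam] by (simp add: space_pair_measure)
  define h where "h y = (\<integral>u. indicator N (u, y) \<partial>K y :: real)" for y
  have h_nonneg: "0 \<le> h y" for y
    unfolding h_def by (auto intro!: integral_nonneg_AE)
  have "(\<integral>y. h y \<partial>\<nu>) = (\<integral>x. indicator N x \<partial>Lam)"
    unfolding h_def by (rule integral_disintegration[symmetric, where B=1]) auto
  also have "\<dots> = 0"
    using N(2,3) by (simp add: measure_def)
  finally have "AE y in \<nu>. h y = 0"
  proof (subst (asm) integral_nonneg_eq_0_iff_AE)
    show "integrable \<nu> h"
      using abs_kernel_integral_le[of "indicator N" 1] unfolding h_def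
      by (intro nu.integrable_const_bound[where B=1]) auto
  qed (use h_nonneg in auto)
  then show ?thesis
  proof eventually_elim
    case (elim y)
    interpret prob_space "K y" by (rule prob_space_kernel)
    have "AE u in K y. (indicator N (u, y) :: real) = 0"
      using elim unfolding h_def
      by (subst (asm) integral_nonneg_eq_0_iff_AE) (auto intro!: integrable_const_bound[where B=1])
    then show ?case
      by eventually_elim (use N(1) space_Lam in \<open>auto simp: indicator_def\<close>)
  qed
qed

lemma integrable_comp_snd:
  fixes h :: "'y \<Rightarrow> real"
  assumes "integrable \<nu> h" shows "integrable Lam (\<lambda>x. h (snd x))"
proof -
  have [measurable]: "h \<in> borel_measurable borel" using assms by auto
  show ?thesis
    using assms Lam_marginal integrable_distr_eq[of snd Lam borel h] by simp
qed

lemma AE_comp_snd: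
  assumes "AE y in \<nu>. P y" shows "AE x in Lam. P (snd x)"
  by (rule AE_distrD[where M'=borel]) (use assms Lam_marginal in auto)

lemma integral_mult_kernel_integral:
  fixes g :: "'u \<times> 'y \<Rightarrow> real" and h :: "'y \<Rightarrow> real"
  assumes [measurable]: "g \<in> borel_measurable (borel \<Otimes>\<^sub>M borel)" "h \<in> borel_measurable borel"
    and "\<And>x. \<bar>g x\<bar> \<le> B" and "\<And>y. \<bar>h y\<bar> \<le> C"
  shows "(\<integral>x. g x * h (snd x) \<partial>Lam) = (\<integral>y. (\<integral>u. g (u, y) \<partial>K y) * h y \<partial>\<nu>)"
proof -
  have "\<bar>g x * h (snd x)\<bar> \<le> B * C" for x
    unfolding abs_mult using assms(3,4) by (intro mult_mono) (auto intro: order_trans[OF abs_ge_zero])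
  then have "(\<integral>x. g x * h (snd x) \<partial>Lam) = (\<integral>y. (\<integral>u. g (u, y) * h y \<partial>K y) \<partial>\<nu>)"
    by (subst integral_disintegration[where B="B * C"]) auto
  then show ?thesis by simp
qed

text \<open>By the disintegration, the correlation of the fibre integrals with their own shift equals
  their second moment.\<close>

lemma AE_kernel_integral_T_eq:
  fixes g :: "'u \<times> 'y \<Rightarrow> real"
  assumes [measurable]: "g \<in> borel_measurable (borel \<Otimes>\<^sub>M borel)" and bounded: "\<And>x. \<bar>g x\<bar> \<le> C"
    and inv: "AE x in Lam. g ((\<lambda>(u, y). (R u, T y)) x) = g x"
  shows "AE y in \<nu>. (\<integral>u. g (u, T y) \<partial>K (T y)) = (\<integral>u. g (u, y) \<partial>K y)"
proof -
  define \<phi> where "\<phi> y = (\<integral>u. g (u, y) \<partial>K y)" for y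
  have [measurable]: "\<phi> \<in> borel_measurable borel" unfolding \<phi>_def by measurable
  have \<phi>_bounded: "\<bar>\<phi> y\<bar> \<le> C" for y
    unfolding \<phi>_def by (rule abs_kernel_integral_le) (use bounded in auto)
  have "(\<integral>y. \<phi> y * \<phi> (T y) \<partial>\<nu>) = (\<integral>x. g x * \<phi> (T (snd x)) \<partial>Lam)"
    using integral_mult_kernel_integral[of g "\<lambda>y. \<phi> (T y)" C C] bounded \<phi>_bounded
    unfolding \<phi>_def[symmetric] by simp
  also have "\<dots> = (\<integral>x. g ((\<lambda>(u, y). (R u, T y)) x) * \<phi> (snd ((\<lambda>(u, y). (R u, T y)) x)) \<partial>Lam)"
    using inv by (intro integral_cong_AE) (auto split: prod.splits)
  also have "\<dots> = (\<integral>x. g x * \<phi> (snd x) \<partial>Lam)"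
    by (rule lam.integral_comp_T) measurable
  also have "\<dots> = (\<integral>y. \<phi> y * \<phi> y \<partial>\<nu>)"
    using integral_mult_kernel_integral[of g \<phi> C C] bounded \<phi>_bounded
    unfolding \<phi>_def[symmetric] by simp
  finally have "AE y in \<nu>. \<phi> (T y) = \<phi> y"
    by (intro nu.AE_comp_T_eq_if_integral_mult_comp_T_eq[OF _ \<phi>_bounded]) auto
  then show ?thesis unfolding \<phi>_def .
qed

lemma AE_kernel_integral_eq_integral_if_invariant:
  fixes g :: "'u \<times> 'y \<Rightarrow> real"
  assumes [measurable]: "g \<in> borel_measurable (borel \<Otimes>\<^sub>M borel)"
    and bounded: "AE x in Lam. \<bar>g x\<bar> \<le> C"
    and inv: "AE x in Lam. g ((\<lambda>(u, y). (R u, T y)) x) = g x"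
  shows "AE y in \<nu>. (\<integral>u. g (u, y) \<partial>K y) = (\<integral>x. g x \<partial>Lam)"
proof -
  define g' where "g' x = max (- C) (min C (g x))" for x
  have [measurable]: "g' \<in> borel_measurable (borel \<Otimes>\<^sub>M borel)" unfolding g'_def by measurable
  from bounded have "AE x in Lam. 0 \<le> C"
    by eventually_elim (rule order_trans[OF abs_ge_zero])
  then have g'_bounded: "\<bar>g' x\<bar> \<le> C" for x
    by (auto simp: g'_def)
  have g'_eq: "AE x in Lam. g' x = g x"
    using bounded by eventually_elim (auto simp: g'_def)
  have g'_inv: "AE x in Lam. g' ((\<lambda>(u, y). (R u, T y)) x) = g' x"
    using lam.AE_T[OF g'_eq] g'_eq inv by eventually_elim simp
  have "AE y in \<nu>. (\<integral>u. g' (u, T y) \<partial>K (T y)) = (\<integral>u. g' (u, y) \<partial>K y)"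
    by (rule AE_kernel_integral_T_eq[OF _ g'_bounded g'_inv]) measurable
  moreover have "(\<lambda>y. \<integral>u. g' (u, y) \<partial>K y) \<in> borel_measurable \<nu>"
    by measurable
  ultimately obtain c where c: "AE y in \<nu>. (\<integral>u. g' (u, y) \<partial>K y) = c"
    using nu.ergodic_AE_eq_const[OF space_nu nu_ergodic] by blast
  have "c = (\<integral>y. (\<integral>u. g' (u, y) \<partial>K y) \<partial>\<nu>)"
    using c by (subst integral_cong_AE[where g="\<lambda>_. c"]) (auto simp: nu.prob_space)
  also have "\<dots> = (\<integral>x. g' x \<partial>Lam)"
    using g'_bounded by (intro integral_disintegration[symmetric]) auto
  also have "\<dots> = (\<integral>x. g x \<partial>Lam)"
    using g'_eq by (intro integral_cong_AE) auto
  finally have c_eq: "c = (\<integral>x. g x \<partial>Lam)" .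
  from AE_disintegration[OF g'_eq] c show ?thesis
  proof eventually_elim
    case (elim y)
    have "(\<integral>u. g (u, y) \<partial>K y) = (\<integral>u. g' (u, y) \<partial>K y)"
      using elim(1) by (intro integral_cong_AE) auto
    then show ?case using elim(2) c_eq by simp
  qed
qed

lemma lam_birkhoff_sum_eq:
  "lam.birkhoff_sum f n (u, y) = (\<Sum>k<n. f ((R ^^ k) u, (T ^^ k) y))"
  unfolding lam.birkhoff_sum_def by (simp add: iterate_prod_map)

lemma abs_lam_birkhoff_sum_le:
  assumes "\<And>u y. \<bar>f (u, y)\<bar> \<le> fstar y"
  shows "\<bar>lam.birkhoff_sum f n (u, y)\<bar> \<le> nu.birkhoff_sum fstar n y"
  unfolding lam_birkhoff_sum_eq nu.birkhoff_sum_def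
  by (rule order_trans[OF sum_abs]) (intro sum_mono assms)

lemma integrable_if_dominated:
  fixes f :: "'u \<times> 'y \<Rightarrow> real"
  assumes [measurable]: "f \<in> borel_measurable (borel \<Otimes>\<^sub>M borel)"
    and "integrable \<nu> fstar" and "\<And>u y. \<bar>f (u, y)\<bar> \<le> fstar y"
  shows "integrable Lam f"
proof (rule Bochner_Integration.integrable_bound)
  show "integrable Lam (\<lambda>x. fstar (snd x))" by (rule integrable_comp_snd) fact
  show "AE x in Lam. norm (f x) \<le> norm (fstar (snd x))"
    using assms(3) by (intro AE_I2) (auto split: prod.splits intro: order_trans[OF _ abs_ge_self])
qed measurable

lemma AE_abs_birkhoff_limit_le:
  fixes f :: "'u \<times> 'y \<Rightarrow> real"
  assumes [measurable]: "f \<in> borel_measurable (borel \<Otimes>\<^sub>M borel)"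
    and fstar: "integrable \<nu> fstar" and dominated: "\<And>u y. \<bar>f (u, y)\<bar> \<le> fstar y"
  shows "AE x in Lam. \<bar>lam.birkhoff_limit f x\<bar> \<le> (\<integral>y. fstar y \<partial>\<nu>)"
  using lam.AE_birkhoff_average_tendsto[OF integrable_if_dominated[OF assms]]
    AE_comp_snd[OF nu.ergodic_birkhoff_average_tendsto[OF space_nu nu_ergodic fstar]]
proof eventually_elim
  case (elim x)
  obtain u y where x: "x = (u, y)" by (cases x)
  show ?case
  proof (rule LIMSEQ_le[OF tendsto_rabs[OF elim(1)] elim(2)])
    show "\<exists>N. \<forall>n\<ge>N. \<bar>lam.birkhoff_sum f n x / real n\<bar> \<le> nu.birkhoff_sum fstar n (snd x) / real n"
      using abs_lam_birkhoff_sum_le[where f=f and fstar=fstar, OF dominated] unfolding x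
      by (auto simp: abs_div_pos divide_right_mono)
  qed
qed

lemma tendsto_kernel_integral_birkhoff_average:
  fixes f :: "'u \<times> 'y \<Rightarrow> real"
  assumes [measurable]: "f \<in> borel_measurable (borel \<Otimes>\<^sub>M borel)"
    and dominated: "\<And>u y. \<bar>f (u, y)\<bar> \<le> fstar y"
    and lim: "AE u in K y. (\<lambda>n. lam.birkhoff_sum f n (u, y) / real n) \<longlonglongrightarrow> lam.birkhoff_limit f (u, y)"
    and "convergent (\<lambda>n. nu.birkhoff_sum fstar n y / real n)"
  shows "(\<lambda>n. \<integral>u. lam.birkhoff_sum f n (u, y) / real n \<partial>K y)
    \<longlonglongrightarrow> (\<integral>u. lam.birkhoff_limit f (u, y) \<partial>K y)"
proof -
  obtain B where B: "\<And>n. \<bar>nu.birkhoff_sum fstar n y / real n\<bar> \<le> B"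
    using convergent_imp_Bseq[OF assms(4)] unfolding Bseq_def by auto
  have bound: "\<bar>lam.birkhoff_sum f n (u, y) / real n\<bar> \<le> B" for n u
  proof -
    have "\<bar>lam.birkhoff_sum f n (u, y) / real n\<bar> \<le> nu.birkhoff_sum fstar n y / real n"
      using abs_lam_birkhoff_sum_le[where f=f and fstar=fstar, OF dominated, of n u y]
      by (simp add: abs_div_pos divide_right_mono)
    then show ?thesis using B[of n] by linarith
  qed
  interpret prob_space "K y" by (rule prob_space_kernel)
  show ?thesis using bound
    by (intro integral_dominated_convergence[where w="\<lambda>_. B"] lim) auto
qed

end

theorem lemma5p3:
  fixes T :: "'y::polish_space \<Rightarrow> 'y" and \<nu> :: "'y measure"
    and R :: "'u::complete_space \<Rightarrow> 'u"
    and f :: "'u \<times> 'y \<Rightarrow> real" and fstar :: "'y \<Rightarrow> real"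
    and Lam :: "('u \<times> 'y) measure" and K :: "'y \<Rightarrow> 'u measure"
  assumes "invariant_ergodic T \<nu>"
    and "R \<in> borel_measurable borel"
    and "f \<in> borel_measurable borel"
    and "integrable \<nu> fstar"
    and "\<And>y u. \<bar>f (u, y)\<bar> \<le> fstar y"
    and "Lam \<in> joinings R T \<nu>"
    and "disintegration K \<nu> Lam"
  shows "AE y in \<nu>. (\<lambda>n. (1 / real n) *
            (\<integral>u. (\<Sum>k<n. f ((R ^^ k) u, (T ^^ k) y)) \<partial>K y))
          \<longlonglongrightarrow> (\<integral>x. f x \<partial>Lam)"
proof -
  interpret ergodic_joining R T \<nu> Lam K
    using assms(1,2,6,7) by unfold_locales
  have f[measurable]: "f \<in> borel_measurable (borel \<Otimes>\<^sub>M borel)"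
    using assms(3) by (simp add: measurable_cong_sets[OF sets_borel_prod_second_countable refl])
  note f_int = integrable_if_dominated[OF f assms(4,5)]
  have "AE y in \<nu>. (\<integral>u. lam.birkhoff_limit f (u, y) \<partial>K y) = (\<integral>x. lam.birkhoff_limit f x \<partial>Lam)"
    by (rule AE_kernel_integral_eq_integral_if_invariant[OF _ AE_abs_birkhoff_limit_le[OF f assms(4,5)]
          lam.AE_birkhoff_limit_T[OF f_int]]) measurable
  moreover note AE_disintegration[OF lam.AE_birkhoff_average_tendsto[OF f_int]]
  moreover note nu.AE_birkhoff_average_convergent[OF assms(4)]
  ultimately show ?thesis
  proof eventually_elim
    case (elim y)
    from tendsto_kernel_integral_birkhoff_average[OF f assms(5) elim(2,3)]
    show ?case
      using elim(1) lam.integral_birkhoff_limit[OF f_int] by (simp add: lam_birkhoff_sum_eq)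
  qed
qed

end
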